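(* Assume all features are binary, $x_{i,k}\in\{0,1\}$ for all $i\in[n],k\in[p]$. Let $\mathbf q\in\mathbb R^{2nK}_{\ge0}$, $r\ge0$ and $T\in\mathbb R$, and for $k\in[p]$ define $$\mathrm{Prune}(k\mid\mathbf q,r)=\sum_{i\in[n]}\max\Big\{\sum_{l\in\mathcal D_i}q_{il}x_{l,k},\;x_{i,k}\Big[\sum_{l\in\mathcal D_i}q_{il}-\sum_{j\in\mathcal S_i}q_{ij}(1-x_{j,k})\Big]\Big\}+r\sqrt{\sum_{i\in[n]}\Big[\sum_{l\in\mathcal D_i}\max\{x_{i,k},x_{l,k}\}+\sum_{j\in\mathcal S_i}\max\{x_{i,k},x_{j,k}\}\Big]}.$$ If $\mathrm{Prune}(k\mid\mathbf q,r)\le T$, then for every descendant $k'\supseteq k$ of $k$, $\mathbf C_{k',:}\mathbf q+r\|\mathbf C_{k',:}\|_2\le T$.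
   Context: Let $n,K,p\ge1$ be integers and $[n]=\{1,\dots,n\}$. For each $i\in[n]$ let $\mathbf x_i=(x_{i,1},\dots,x_{i,p})^\top\in\mathbb R^p$, and let $\mathcal D_i,\mathcal S_i\subseteq[n]$ be sets of size $K$ (different-class resp. same-class neighbors of sample $i$). For $i,j\in[n]$ put $\mathbf c_{ij}=(\mathbf x_i-\mathbf x_j)\circ(\mathbf x_i-\mathbf x_j)$ (entrywise product). Vectors in $\mathbb R^{2nK}$ are indexed by the pairs $(i,l)$, $i\in[n]$, $l\in\mathcal D_i$ ("different-class pairs"), and the pairs $(i,j)$, $i\in[n]$, $j\in\mathcal S_i$ ("same-class pairs"); $\mathbf q$ has entries $q_{il},q_{ij}$. $\mathbf C\in\mathbb R^{p\times2nK}$ has column $\mathbf c_{il}$ for each different-class pair and column $-\mathbf c_{ij}$ for each same-class pair; $\mathbf C_{k,:}$ is its $k$-th row. The feature indices $[p]$ are nodes of a rooted graph-mining tree: $x_{i,k}=g(\#(H_k\sqsubseteq G_i))$ with $g(x)=1_{x>0}$, where $H_k$ is the subgraph at node $k$, $G_i$ the $i$-th input graph, $\#(H\sqsubseteq G)$ the number of non-overlapping occurrences of $H$ in $G$, and each node's subgraph is contained in its children's subgraphs. Write $k'\supseteq k$ if $k'$ is a descendant of $k$; then $x_{i,k'}\le x_{i,k}$ for all $i$ whenever $k'\supseteq k$. *)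

theory Defs
  imports Complex_Main
begin

text \<open>Samples are indexed by [n] = {1..n}, features by [p] = {1..p}.
  x i k is the k-th feature of sample i.  The weight vector q is split into
  qD i l (different-class pairs, l in D i) and qS i j (same-class pairs, j in S i).\<close>

definition cvec :: "(nat \<Rightarrow> nat \<Rightarrow> real) \<Rightarrow> nat \<Rightarrow> nat \<Rightarrow> nat \<Rightarrow> real" where
  "cvec x i j k = (x i k - x j k) * (x i k - x j k)"

definition Crow_q :: "nat \<Rightarrow> (nat \<Rightarrow> nat \<Rightarrow> real) \<Rightarrow> (nat \<Rightarrow> nat set) \<Rightarrow> (nat \<Rightarrow> nat set)
    \<Rightarrow> (nat \<Rightarrow> nat \<Rightarrow> real) \<Rightarrow> (nat \<Rightarrow> nat \<Rightarrow> real) \<Rightarrow> nat \<Rightarrow> real" where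
  "Crow_q n x D S qD qS k =
     (\<Sum>i\<in>{1..n}. \<Sum>l\<in>D i. qD i l * cvec x i l k)
     + (\<Sum>i\<in>{1..n}. \<Sum>j\<in>S i. qS i j * (- cvec x i j k))"

definition Crow_norm :: "nat \<Rightarrow> (nat \<Rightarrow> nat \<Rightarrow> real) \<Rightarrow> (nat \<Rightarrow> nat set) \<Rightarrow> (nat \<Rightarrow> nat set)
    \<Rightarrow> nat \<Rightarrow> real" where
  "Crow_norm n x D S k =
     sqrt ((\<Sum>i\<in>{1..n}. \<Sum>l\<in>D i. (cvec x i l k)\<^sup>2)
         + (\<Sum>i\<in>{1..n}. \<Sum>j\<in>S i. (- cvec x i j k)\<^sup>2))"

definition Prune :: "nat \<Rightarrow> (nat \<Rightarrow> nat \<Rightarrow> real) \<Rightarrow> (nat \<Rightarrow> nat set) \<Rightarrow> (nat \<Rightarrow> nat set)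
    \<Rightarrow> (nat \<Rightarrow> nat \<Rightarrow> real) \<Rightarrow> (nat \<Rightarrow> nat \<Rightarrow> real) \<Rightarrow> real \<Rightarrow> nat \<Rightarrow> real" where
  "Prune n x D S qD qS r k =
     (\<Sum>i\<in>{1..n}. max (\<Sum>l\<in>D i. qD i l * x l k)
                        (x i k * ((\<Sum>l\<in>D i. qD i l) - (\<Sum>j\<in>S i. qS i j * (1 - x j k)))))
     + r * sqrt (\<Sum>i\<in>{1..n}. (\<Sum>l\<in>D i. max (x i k) (x l k)) + (\<Sum>j\<in>S i. max (x i k) (x j k)))"

text \<open>Rooted tree on the feature indices given by a parent map; k' is a descendant
  of k (written k' \<supseteq> k in the paper) if k is reached from k' by following the
  parent map at least once.\<close>
definition descendant :: "(nat \<Rightarrow> nat) \<Rightarrow> nat \<Rightarrow> nat \<Rightarrow> bool" where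
  "descendant par k' k \<longleftrightarrow> (\<exists>m\<ge>1. (par ^^ m) k' = k)"

end

theory Submission
  imports Defs
begin

text \<open>Along the mining tree a descendant feature k' is pointwise dominated by k, and for
  binary features every summand of row k' of C is bounded by data of feature k alone.
  A sample i with x i k' = 0 gains at most qD i l on a different-class pair, and only if
  x l k' = 1, hence x l k = 1; a sample with x i k' = 1 (hence x i k = 1) gains at most
  the full weight of its different-class pairs and loses qS i j on every same-class pair
  with x j k = 0.  Likewise the squared entries of the row are bounded by
  max (x i k) (x j k).\<close>

lemma cvec_sq_le_max:
  assumes "x i k \<in> {0, 1}" "x j k \<in> {0, 1}" "x i k' \<in> {0, 1}" "x j k' \<in> {0, 1}"
    and "x i k' \<le> x i k" "x j k' \<le> x j k"
  shows "(cvec x i j k')\<^sup>2 \<le> max (x i k) (x j k)"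
  using assms unfolding cvec_def by (elim insertE emptyE) simp_all

lemma sample_Crow_q_term_le:
  fixes x :: "nat \<Rightarrow> nat \<Rightarrow> real"
  assumes bin: "\<forall>j\<in>A. x j k \<in> {0, 1} \<and> x j k' \<in> {0, 1}"
    and mono: "\<forall>j\<in>A. x j k' \<le> x j k"
    and i: "i \<in> A" and "D \<subseteq> A" "S \<subseteq> A"
    and qD_nonneg: "\<forall>l\<in>D. qD l \<ge> 0" and qS_nonneg: "\<forall>j\<in>S. qS j \<ge> 0"
  shows "(\<Sum>l\<in>D. qD l * cvec x i l k') + (\<Sum>j\<in>S. qS j * (- cvec x i j k'))
    \<le> max (\<Sum>l\<in>D. qD l * x l k) (x i k * ((\<Sum>l\<in>D. qD l) - (\<Sum>j\<in>S. qS j * (1 - x j k))))"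
proof (cases "x i k' = 0")
  case True
  have "(\<Sum>l\<in>D. qD l * cvec x i l k') \<le> (\<Sum>l\<in>D. qD l * x l k)"
  proof (rule sum_mono)
    fix l assume l: "l \<in> D"
    then have "x l k' \<in> {0, 1}" "x l k' \<le> x l k"
      using bin mono \<open>D \<subseteq> A\<close> by auto
    then have "cvec x i l k' \<le> x l k"
      using True by (elim insertE emptyE) (simp_all add: cvec_def)
    then show "qD l * cvec x i l k' \<le> qD l * x l k"
      using qD_nonneg l by (simp add: mult_left_mono)
  qed
  moreover have "(\<Sum>j\<in>S. qS j * (- cvec x i j k')) \<le> 0"
    using qS_nonneg by (intro sum_nonpos) (simp add: cvec_def)
  ultimately show ?thesis
    by linarith
next
  case False
  then have xik': "x i k' = 1"
    using bin i by auto
  then have xik: "x i k = 1"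
    using bin mono i by force
  have "(\<Sum>l\<in>D. qD l * cvec x i l k') \<le> (\<Sum>l\<in>D. qD l)"
  proof (rule sum_mono)
    fix l assume l: "l \<in> D"
    then have "x l k' \<in> {0, 1}"
      using bin \<open>D \<subseteq> A\<close> by auto
    then have "cvec x i l k' \<le> 1"
      using xik' by (elim insertE emptyE) (simp_all add: cvec_def)
    then show "qD l * cvec x i l k' \<le> qD l"
      using qD_nonneg l mult_left_mono[of "cvec x i l k'" 1 "qD l"] by simp
  qed
  moreover have "(\<Sum>j\<in>S. qS j * (1 - x j k)) \<le> (\<Sum>j\<in>S. qS j * cvec x i j k')"
  proof (rule sum_mono)
    fix j assume j: "j \<in> S"
    then have "x j k \<in> {0, 1}" "x j k' \<in> {0, 1}" "x j k' \<le> x j k"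
      using bin mono \<open>S \<subseteq> A\<close> by auto
    then have "1 - x j k \<le> cvec x i j k'"
      using xik' by (elim insertE emptyE) (simp_all add: cvec_def)
    then show "qS j * (1 - x j k) \<le> qS j * cvec x i j k'"
      using qS_nonneg j by (simp add: mult_left_mono)
  qed
  ultimately show ?thesis
    using xik by (simp add: sum_negf)
qed

lemma sample_Crow_norm_term_le:
  fixes x :: "nat \<Rightarrow> nat \<Rightarrow> real"
  assumes bin: "\<forall>j\<in>A. x j k \<in> {0, 1} \<and> x j k' \<in> {0, 1}"
    and mono: "\<forall>j\<in>A. x j k' \<le> x j k"
    and i: "i \<in> A" and "D \<subseteq> A" "S \<subseteq> A"
  shows "(\<Sum>l\<in>D. (cvec x i l k')\<^sup>2) + (\<Sum>j\<in>S. (- cvec x i j k')\<^sup>2)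
    \<le> (\<Sum>l\<in>D. max (x i k) (x l k)) + (\<Sum>j\<in>S. max (x i k) (x j k))"
proof -
  have bound: "(cvec x i j k')\<^sup>2 \<le> max (x i k) (x j k)" if "j \<in> A" for j
    using bin mono i that by (intro cvec_sq_le_max) auto
  have "(\<Sum>l\<in>D. (cvec x i l k')\<^sup>2) \<le> (\<Sum>l\<in>D. max (x i k) (x l k))"
    using bound \<open>D \<subseteq> A\<close> by (intro sum_mono) auto
  moreover have "(\<Sum>j\<in>S. (- cvec x i j k')\<^sup>2) \<le> (\<Sum>j\<in>S. max (x i k) (x j k))"
    using bound \<open>S \<subseteq> A\<close> by (intro sum_mono) auto
  ultimately show ?thesis
    by linarith
qed

lemma Crow_q_le_Prune_loss:
  fixes x :: "nat \<Rightarrow> nat \<Rightarrow> real"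
  assumes bin: "\<forall>i\<in>{1..n}. x i k \<in> {0, 1} \<and> x i k' \<in> {0, 1}"
    and mono: "\<forall>i\<in>{1..n}. x i k' \<le> x i k"
    and sub: "\<forall>i\<in>{1..n}. D i \<subseteq> {1..n} \<and> S i \<subseteq> {1..n}"
    and qD_nonneg: "\<forall>i\<in>{1..n}. \<forall>l\<in>D i. qD i l \<ge> 0"
    and qS_nonneg: "\<forall>i\<in>{1..n}. \<forall>j\<in>S i. qS i j \<ge> 0"
  shows "Crow_q n x D S qD qS k'
    \<le> (\<Sum>i\<in>{1..n}. max (\<Sum>l\<in>D i. qD i l * x l k)
                        (x i k * ((\<Sum>l\<in>D i. qD i l) - (\<Sum>j\<in>S i. qS i j * (1 - x j k)))))"
  unfolding Crow_q_def sum.distrib[symmetric]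
  using assms by (intro sum_mono sample_Crow_q_term_le[where A = "{1..n}"]) auto

lemma Crow_norm_le_Prune_radius:
  fixes x :: "nat \<Rightarrow> nat \<Rightarrow> real"
  assumes bin: "\<forall>i\<in>{1..n}. x i k \<in> {0, 1} \<and> x i k' \<in> {0, 1}"
    and mono: "\<forall>i\<in>{1..n}. x i k' \<le> x i k"
    and sub: "\<forall>i\<in>{1..n}. D i \<subseteq> {1..n} \<and> S i \<subseteq> {1..n}"
  shows "Crow_norm n x D S k'
    \<le> sqrt (\<Sum>i\<in>{1..n}. (\<Sum>l\<in>D i. max (x i k) (x l k)) + (\<Sum>j\<in>S i. max (x i k) (x j k)))"
  unfolding Crow_norm_def sum.distrib[symmetric]
  using assms by (intro real_sqrt_le_mono sum_mono sample_Crow_norm_term_le[where A = "{1..n}"]) auto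

theorem lemma2:
  fixes n K p :: nat
    and x :: "nat \<Rightarrow> nat \<Rightarrow> real"
    and D S :: "nat \<Rightarrow> nat set"
    and qD qS :: "nat \<Rightarrow> nat \<Rightarrow> real"
    and par :: "nat \<Rightarrow> nat"
    and r T :: real
    and k k' :: nat
  assumes "n \<ge> 1" and "K \<ge> 1" and "p \<ge> 1"
    and D_sub: "\<forall>i\<in>{1..n}. D i \<subseteq> {1..n} \<and> card (D i) = K"
    and S_sub: "\<forall>i\<in>{1..n}. S i \<subseteq> {1..n} \<and> card (S i) = K"
    and binary: "\<forall>i\<in>{1..n}. \<forall>k\<in>{1..p}. x i k \<in> {0, 1}"
    and tree_mono: "\<forall>k1\<in>{1..p}. \<forall>k2\<in>{1..p}. descendant par k2 k1 \<longrightarrow>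
                      (\<forall>i\<in>{1..n}. x i k2 \<le> x i k1)"
    and qD_nonneg: "\<forall>i\<in>{1..n}. \<forall>l\<in>D i. qD i l \<ge> 0"
    and qS_nonneg: "\<forall>i\<in>{1..n}. \<forall>j\<in>S i. qS i j \<ge> 0"
    and "r \<ge> 0"
    and "k \<in> {1..p}" and "k' \<in> {1..p}"
    and desc: "descendant par k' k"
    and prune: "Prune n x D S qD qS r k \<le> T"
  shows "Crow_q n x D S qD qS k' + r * Crow_norm n x D S k' \<le> T"
proof -
  have bin: "\<forall>i\<in>{1..n}. x i k \<in> {0, 1} \<and> x i k' \<in> {0, 1}"
    using binary \<open>k \<in> {1..p}\<close> \<open>k' \<in> {1..p}\<close> by blast
  have mono: "\<forall>i\<in>{1..n}. x i k' \<le> x i k"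
    using tree_mono \<open>k \<in> {1..p}\<close> \<open>k' \<in> {1..p}\<close> desc by blast
  have sub: "\<forall>i\<in>{1..n}. D i \<subseteq> {1..n} \<and> S i \<subseteq> {1..n}"
    using D_sub S_sub by blast
  note loss = Crow_q_le_Prune_loss[OF bin mono sub qD_nonneg qS_nonneg]
  have "r * Crow_norm n x D S k'
      \<le> r * sqrt (\<Sum>i\<in>{1..n}. (\<Sum>l\<in>D i. max (x i k) (x l k)) + (\<Sum>j\<in>S i. max (x i k) (x j k)))"
    using Crow_norm_le_Prune_radius[OF bin mono sub] \<open>r \<ge> 0\<close> by (rule mult_left_mono)
  with loss prune show ?thesis
    unfolding Prune_def by linarith
qed

end
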